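(* Assume the defocusing case $\mu_1\le\dots\le\mu_n<0$ (with $n\ge3$). Then there are at most finitely many possible bifurcation parameters, i.e. the set of $\beta\in(-\infty,\mu_1)\cup(\mu_n,\bar\beta)$ such that $f(\beta)=\lambda_k$ for some $k\in\mathbb N$ is finite.
   Context: Let $\Omega\subset\mathbb R^N$ ($N\le3$) be a smooth bounded domain whose principal Dirichlet eigenvalue of $-\Delta$ is less than $1$, and $\omega\in H_0^1(\Omega)$ the unique positive solution of $-\Delta\omega-\omega=-\omega^3$. Let $-1=\lambda_1<\lambda_2<\cdots\to\infty$ be the distinct eigenvalues of $-\Delta\psi-\psi=\lambda\omega^2\psi$, $\psi\in H_0^1(\Omega)$. Let $g(\beta)=1+\beta\sum_{j=1}^n\frac1{\mu_j-\beta}$, $f(\beta)=-1-\frac2{g(\beta)}$, and $\bar\beta$ the unique zero of $g$ in $(\mu_n,\infty)$. *)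

theory Defs
  imports Complex_Main
begin

definition gfun :: "(nat \<Rightarrow> real) \<Rightarrow> nat \<Rightarrow> real \<Rightarrow> real" where
  "gfun mu n \<beta> = 1 + \<beta> * (\<Sum>j=1..n. 1 / (mu j - \<beta>))"

definition ffun :: "(nat \<Rightarrow> real) \<Rightarrow> nat \<Rightarrow> real \<Rightarrow> real" where
  "ffun mu n \<beta> = -1 - 2 / gfun mu n \<beta>"

definition bar_beta :: "(nat \<Rightarrow> real) \<Rightarrow> nat \<Rightarrow> real" where
  "bar_beta mu n = (THE b. mu n < b \<and> gfun mu n b = 0)"

text \<open>Abstract interface for the distinct eigenvalues of the weighted linearized
  problem: a strictly increasing sequence indexed from 1, starting at -1,
  and tending to infinity.\<close>
definition eigen_seq :: "(nat \<Rightarrow> real) \<Rightarrow> bool" where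
  "eigen_seq lam \<longleftrightarrow> lam 1 = -1 \<and> (\<forall>k\<ge>1. lam k < lam (Suc k)) \<and> filterlim lam at_top sequentially"

end

theory Submission
  imports Defs
begin

text \<open>For \<open>\<mu>\<^sub>j < 0\<close> each summand \<open>\<beta> / (\<mu>\<^sub>j - \<beta>)\<close> of \<open>g\<close> is strictly decreasing away from
  its pole, so \<open>g\<close>, and with it \<open>f = -1 - 2/g\<close>, is injective on \<open>(-\<infinity>, \<mu>\<^sub>1)\<close> and on
  \<open>(\<mu>\<^sub>n, \<infinity>)\<close>. Left of \<open>\<mu>\<^sub>1\<close> every summand is below \<open>-1\<close>, so \<open>g \<le> 1 - n \<le> -2\<close>, and
  \<open>g > 0\<close> between \<open>\<mu>\<^sub>n\<close> and its zero; either way \<open>f \<le> 0\<close>. Since \<open>\<lambda>\<^sub>k \<rightarrow> \<infinity>\<close>, only finitely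
  many eigenvalues are non-positive, and each is attained at most once on each region.\<close>

lemma gfun_eq_sum: "gfun mu n \<beta> = 1 + (\<Sum>j=1..n. \<beta> / (mu j - \<beta>))"
  unfolding gfun_def by (simp add: sum_distrib_left)

lemma quotient_strict_decreasing:
  fixes m a b :: real
  assumes "m < 0" "a < b" "m \<notin> {a..b}"
  shows "b / (m - b) < a / (m - a)"
proof -
  have "m - a \<noteq> 0" "m - b \<noteq> 0"
    using assms by auto
  then have "b / (m - b) - a / (m - a) = m * (b - a) / ((m - a) * (m - b))"
    by (simp add: field_simps)
  moreover have "0 < (m - a) * (m - b)"
    using assms by (cases "m < a") (auto intro: mult_pos_pos mult_neg_neg)
  moreover have "m * (b - a) < 0"
    using assms by (simp add: mult_neg_pos)
  ultimately show ?thesis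
    by (smt (verit) divide_neg_pos)
qed

lemma gfun_strict_decreasing:
  assumes "n \<ge> 1" "a < b"
    and "\<And>j. j \<in> {1..n} \<Longrightarrow> mu j < 0 \<and> mu j \<notin> {a..b}"
  shows "gfun mu n b < gfun mu n a"
proof -
  have "(\<Sum>j=1..n. b / (mu j - b)) < (\<Sum>j=1..n. a / (mu j - a))"
    using assms by (intro sum_strict_mono quotient_strict_decreasing) auto
  then show ?thesis
    by (simp add: gfun_eq_sum)
qed

lemma inj_on_gfun:
  assumes "n \<ge> 1" "\<And>a b. a \<in> S \<Longrightarrow> b \<in> S \<Longrightarrow> {a..b} \<subseteq> S"
    and "\<And>j. j \<in> {1..n} \<Longrightarrow> mu j < 0 \<and> mu j \<notin> S"
  shows "inj_on (gfun mu n) S"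
proof (rule inj_onI)
  have decreasing: "gfun mu n v < gfun mu n u" if "u \<in> S" "v \<in> S" "u < v" for u v
  proof (rule gfun_strict_decreasing)
    show "mu j < 0 \<and> mu j \<notin> {u..v}" if "j \<in> {1..n}" for j
      using assms(2)[OF \<open>u \<in> S\<close> \<open>v \<in> S\<close>] assms(3)[OF that] by blast
  qed (use assms(1) that in auto)
  fix a b assume "a \<in> S" "b \<in> S" "gfun mu n a = gfun mu n b"
  then show "a = b"
    using decreasing[of a b] decreasing[of b a] by (metis linorder_neqE_linordered_idom less_irrefl)
qed

lemma inj_on_ffun:
  assumes "inj_on (gfun mu n) S"
  shows "inj_on (ffun mu n) S"
proof -
  have "ffun mu n = (\<lambda>g. -1 - 2 / g) \<circ> gfun mu n"
    by (simp add: ffun_def fun_eq_iff)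
  moreover have "inj (\<lambda>g::real. -1 - 2 / g)"
    by (rule injI) (simp add: divide_inverse)
  ultimately show ?thesis
    using assms by (simp add: comp_inj_on inj_on_subset[of _ UNIV])
qed

lemma gfun_le_left_of_poles:
  assumes "\<And>j. j \<in> {1..n} \<Longrightarrow> \<beta> < mu j \<and> mu j < 0"
  shows "gfun mu n \<beta> \<le> 1 - real n"
proof -
  have "\<beta> / (mu j - \<beta>) \<le> -1" if "j \<in> {1..n}" for j
    using assms[OF that] by (simp add: divide_le_eq)
  then have "(\<Sum>j=1..n. \<beta> / (mu j - \<beta>)) \<le> (\<Sum>j=1..n. -1)"
    by (rule sum_mono)
  then show ?thesis
    by (simp add: gfun_eq_sum)
qed

lemma gfun_le_right_of_poles:
  assumes "\<And>j. j \<in> {1..n} \<Longrightarrow> \<bar>mu j\<bar> < \<beta>"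
  shows "gfun mu n \<beta> \<le> 1 - real n / 2"
proof -
  have "\<beta> / (mu j - \<beta>) \<le> -1/2" if "j \<in> {1..n}" for j
    using assms[OF that] by (auto simp: abs_less_iff divide_le_eq field_simps)
  then have "(\<Sum>j=1..n. \<beta> / (mu j - \<beta>)) \<le> (\<Sum>j=1..n. -1/2)"
    by (rule sum_mono)
  then show ?thesis
    by (simp add: gfun_eq_sum)
qed

lemma isCont_gfun:
  assumes "\<And>j. j \<in> {1..n} \<Longrightarrow> mu j \<noteq> x"
  shows "isCont (gfun mu n) x"
  using assms unfolding gfun_def[abs_def] by (intro continuous_intros) auto

lemma bar_beta_zero:
  assumes "n \<ge> 3" and mu: "\<And>j. j \<in> {1..n} \<Longrightarrow> mu 1 \<le> mu j \<and> mu j \<le> mu n"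
    and "mu n < 0"
  shows "mu n < bar_beta mu n" "gfun mu n (bar_beta mu n) = 0"
proof -
  have neg: "mu j < 0" if "j \<in> {1..n}" for j
    using mu[OF that] assms(3) by linarith
  have "1 \<in> {1..n}"
    using assms(1) by simp
  then have "0 < 1 - mu 1"
    using neg by fastforce
  have "\<bar>mu j\<bar> < 1 - mu 1" if "j \<in> {1..n}" for j
    using mu[OF that] neg[OF that] by linarith
  then have "gfun mu n (1 - mu 1) \<le> 1 - real n / 2"
    by (rule gfun_le_right_of_poles)
  then have "gfun mu n (1 - mu 1) \<le> 0"
    using assms(1) by simp
  moreover have "gfun mu n 0 = 1"
    by (simp add: gfun_def)
  moreover have "\<forall>x. 0 \<le> x \<and> x \<le> 1 - mu 1 \<longrightarrow> isCont (gfun mu n) x"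
    using neg by (force intro: isCont_gfun)
  ultimately obtain z where z: "0 \<le> z" "gfun mu n z = 0"
    using IVT2[of "gfun mu n" "1 - mu 1" 0 0] \<open>0 < 1 - mu 1\<close> by auto
  have inj: "inj_on (gfun mu n) {mu n<..}"
  proof (rule inj_on_gfun)
    show "mu j < 0 \<and> mu j \<notin> {mu n<..}" if "j \<in> {1..n}" for j
      using mu[OF that] neg[OF that] by simp
  qed (use assms(1) in auto)
  have "mu n < z"
    using z assms(3) by simp
  have "bar_beta mu n = z"
    unfolding bar_beta_def
  proof (rule the_equality)
    show "mu n < z \<and> gfun mu n z = 0"
      using \<open>mu n < z\<close> z(2) by simp
    show "b = z" if "mu n < b \<and> gfun mu n b = 0" for b
      using inj_onD[OF inj, of b z] that z(2) \<open>mu n < z\<close> by simp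
  qed
  with z \<open>mu n < z\<close> show "mu n < bar_beta mu n" "gfun mu n (bar_beta mu n) = 0"
    by simp_all
qed

lemma gfun_pos_below_bar_beta:
  assumes "n \<ge> 3" and mu: "\<And>j. j \<in> {1..n} \<Longrightarrow> mu 1 \<le> mu j \<and> mu j \<le> mu n"
    and "mu n < 0" "mu n < \<beta>" "\<beta> < bar_beta mu n"
  shows "0 < gfun mu n \<beta>"
proof -
  have "gfun mu n (bar_beta mu n) < gfun mu n \<beta>"
  proof (rule gfun_strict_decreasing)
    show "mu j < 0 \<and> mu j \<notin> {\<beta>..bar_beta mu n}" if "j \<in> {1..n}" for j
      using mu[OF that] assms(3,4) by auto
  qed (use assms in auto)
  then show ?thesis
    using bar_beta_zero(2)[OF assms(1-3)] by simp
qed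

lemma ffun_nonpos:
  assumes "gfun mu n \<beta> \<le> -2 \<or> 0 < gfun mu n \<beta>"
  shows "ffun mu n \<beta> \<le> 0"
  using assms unfolding ffun_def by (auto simp: divide_simps)

lemma ffun_nonpos_on_regions:
  assumes "n \<ge> 3" and mu: "\<And>j. j \<in> {1..n} \<Longrightarrow> mu 1 \<le> mu j \<and> mu j \<le> mu n"
    and "mu n < 0" "\<beta> < mu 1 \<or> (mu n < \<beta> \<and> \<beta> < bar_beta mu n)"
  shows "ffun mu n \<beta> \<le> 0"
proof (rule ffun_nonpos)
  have "gfun mu n \<beta> \<le> 1 - real n" if "\<beta> < mu 1"
  proof (rule gfun_le_left_of_poles)
    show "\<beta> < mu j \<and> mu j < 0" if "j \<in> {1..n}" for j
      using mu[OF that] \<open>\<beta> < mu 1\<close> assms(3) by linarith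
  qed
  then show "gfun mu n \<beta> \<le> -2 \<or> 0 < gfun mu n \<beta>"
    using assms gfun_pos_below_bar_beta[OF assms(1-3)] by force
qed

lemma inj_on_ffun_regions:
  assumes "n \<ge> 1" and mu: "\<And>j. j \<in> {1..n} \<Longrightarrow> mu 1 \<le> mu j \<and> mu j \<le> mu n"
    and "mu n < 0"
  shows "inj_on (ffun mu n) {..<mu 1}" "inj_on (ffun mu n) {mu n<..}"
proof -
  have "mu j < 0 \<and> mu j \<notin> {..<mu 1}" "mu j < 0 \<and> mu j \<notin> {mu n<..}" if "j \<in> {1..n}" for j
    using mu[OF that] assms(3) by auto
  then show "inj_on (ffun mu n) {..<mu 1}" "inj_on (ffun mu n) {mu n<..}"
    using assms(1) by (intro inj_on_ffun inj_on_gfun; auto)+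
qed

lemma finite_nonpos_values_of_filterlim_at_top:
  fixes u :: "nat \<Rightarrow> real"
  assumes "filterlim u at_top sequentially"
  shows "finite {k. u k \<le> 0}"
proof -
  obtain N where "\<And>k. k \<ge> N \<Longrightarrow> u k \<ge> 1"
    using assms by (auto simp: filterlim_at_top eventually_sequentially)
  then have "{k. u k \<le> 0} \<subseteq> {..<N}"
    by (force simp: not_less[symmetric])
  then show ?thesis
    using finite_subset by blast
qed

theorem lemma3p4:
  fixes mu :: "nat \<Rightarrow> real" and n :: nat and lam :: "nat \<Rightarrow> real"
  assumes "n \<ge> 3"
    and "\<And>i j. 1 \<le> i \<Longrightarrow> i \<le> j \<Longrightarrow> j \<le> n \<Longrightarrow> mu i \<le> mu j"
    and "mu n < 0"
    and "eigen_seq lam"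
  shows "finite {\<beta>. (\<beta> < mu 1 \<or> (mu n < \<beta> \<and> \<beta> < bar_beta mu n))
                    \<and> (\<exists>k\<ge>1. ffun mu n \<beta> = lam k)}"
proof -
  have mu: "mu 1 \<le> mu j \<and> mu j \<le> mu n" if "j \<in> {1..n}" for j
    using assms(2) that by auto
  define L where "L = lam ` {k. lam k \<le> 0}"
  have "finite L"
    using assms(4) unfolding L_def eigen_seq_def
    by (simp add: finite_nonpos_values_of_filterlim_at_top)
  then have "finite (ffun mu n -` L \<inter> {..<mu 1} \<union> ffun mu n -` L \<inter> {mu n<..})"
    using inj_on_ffun_regions[OF _ mu assms(3)] assms(1) by (simp add: finite_vimage_IntI)
  moreover have "{\<beta>. (\<beta> < mu 1 \<or> (mu n < \<beta> \<and> \<beta> < bar_beta mu n))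
                    \<and> (\<exists>k\<ge>1. ffun mu n \<beta> = lam k)}
      \<subseteq> ffun mu n -` L \<inter> {..<mu 1} \<union> ffun mu n -` L \<inter> {mu n<..}"
    using ffun_nonpos_on_regions[OF assms(1) mu assms(3)] unfolding L_def by fastforce
  ultimately show ?thesis
    using finite_subset by blast
qed

end
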